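(* Let $\mathcal N$ be an irreducible SDAN and let $n\neq n_f$ be an atom of $\mathcal N$ with more than one outcome. Then every agent of $A$ is a party of $n$.
   Context: Fix a finite nonempty set $A$ of agents; each $a\in A$ has a nonempty set $Q_a$ of internal states, $Q_A=\prod_{a\in A}Q_a$. A transformer is a left-total relation on $Q_A$; for $S\subseteq A$ an $S$-transformer is one with $(q,q')\in\tau\Rightarrow q_a=q'_a$ for all $a\notin S$. An atom is $n=(P_n,R_n,\delta_n)$: $P_n\subseteq A$ nonempty (parties), $R_n$ finite nonempty (outcomes), $\delta_n$ assigns to each $r\in R_n$ a $P_n$-transformer $\langle n,r\rangle$. A negotiation is $\mathcal N=(N,n_0,n_f,\mathcal X)$ with $N$ a finite set of atoms, $n_0,n_f\in N$ (possibly equal), $T(N)=\{(n,a,r): n\in N,a\in P_n,r\in R_n\}$, $\mathcal X:T(N)\to 2^N$, such that every agent is a party of $n_0$ and of $n_f$, and $\mathcal X(n,a,r)=\emptyset$ iff $n=n_f$. Its graph has vertices $N$ and edges $(n,n')$ whenever $n'\in\mathcal X(n,a,r)$ for some $(n,a,r)$; $\mathcal N$ is acyclic if the graph has no cycle. A marking is $x:A\to 2^N$; initial $x_0(a)=\{n_0\}$, final $x_f(a)=\emptyset$. $x$ enables $n$ if $n\in x(a)$ for all $a\in P_n$; then for $r\in R_n$ the step $(n,r)$ leads to $x'$ with $x'(a)=\mathcal X(n,a,r)$ for $a\in P_n$, $x'(a)=x(a)$ otherwise. A large step is a finite occurrence sequence from $x_0$ to $x_f$. $\mathcal N$ is sound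 if every atom is enabled at some reachable marking and every occurrence sequence from $x_0$ is a large step or can be extended to one. An agent $a$ is deterministic if for each $(n,a,r)\in T(N)$ with $n\ne n_f$, $\mathcal X(n,a,r)$ is a singleton; $\mathcal N$ is deterministic if all agents are deterministic. An SDAN is a sound, deterministic, acyclic negotiation. Merge rule. Guard: some atom $n$ has distinct outcomes $r_1,r_2$ with $\mathcal X(n,a,r_1)=\mathcal X(n,a,r_2)$ for all $a\in P_n$. Action: replace $r_1,r_2$ in $R_n$ by a fresh outcome $r_f$ with $\mathcal X(n,a,r_f)=\mathcal X(n,a,r_1)$ for $a\in P_n$ and $\langle n,r_f\rangle=\langle n,r_1\rangle\cup\langle n,r_2\rangle$. $(n,r)$ unconditionally enables $n'$ if $P_n\supseteq P_{n'}$ and $\mathcal X(n,a,r)=\{n'\}$ for all $a\in P_{n'}$. d-shortcut rule. Guard: atoms $n\neq n'$ and $r\in R_n$ such that $(n,r)$ unconditionally enables $n'$; $n'$ has at most one outcome; and if $n'\in\mathcal X(\tilde n,\tilde a,\tilde r)$ for at least one $(\tilde n,\tilde a,\tilde r)\in T(N)$ with $\tilde n\neq n$, then $\{n'\}=\mathcal X(\tilde n,\tilde a,\tilde r)$ for some $(\tilde n,\tilde a,\tilde r)\in T(N)$ with $\tilde n\ne n$. Action: (1) replace $R_n$ by $(R_n\setminus\{r\})\cup\{r'_f:r'\in R_{n'}\}$ with fresh names; (2) for $a\in P_{n'}$ set $\mathcal X(n,a,r'_f)=\mathcal X(n',a,r')$, for $a\in P_n\setminus P_{n'}$ set $\mathcal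 X(n,a,r'_f)=\mathcal X(n,a,r)$; (3) $\langle n,r'_f\rangle=\langle n,r\rangle\langle n',r'\rangle$ (relational composition); (4) if afterwards $n'\notin\mathcal X(\tilde n,\tilde a,\tilde r)$ for all $(\tilde n,\tilde a,\tilde r)\in T(N)$, remove $n'$. An SDAN is irreducible if neither the merge rule nor the d-shortcut rule can be applied to it. *)

theory Defs
  imports "HOL-Library.FuncSet"
begin

record ('a, 's, 'n, 'r) negotiation =
  agents :: "'a set"
  states :: "'a \<Rightarrow> 's set"
  atoms :: "'n set"
  init :: 'n
  fin :: 'n
  parties :: "'n \<Rightarrow> 'a set"
  outcomes :: "'n \<Rightarrow> 'r set"
  trans :: "'n \<Rightarrow> 'r \<Rightarrow> (('a \<Rightarrow> 's) \<times> ('a \<Rightarrow> 's)) set"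
  succ :: "'n \<Rightarrow> 'a \<Rightarrow> 'r \<Rightarrow> 'n set"

definition global_states :: "('a, 's, 'n, 'r) negotiation \<Rightarrow> ('a \<Rightarrow> 's) set" where
  "global_states \<N> = PiE (agents \<N>) (states \<N>)"

definition is_transformer :: "('a, 's, 'n, 'r) negotiation \<Rightarrow> 'a set \<Rightarrow> (('a \<Rightarrow> 's) \<times> ('a \<Rightarrow> 's)) set \<Rightarrow> bool" where
  "is_transformer \<N> S \<tau> \<longleftrightarrow>
     \<tau> \<subseteq> global_states \<N> \<times> global_states \<N> \<and>
     (\<forall>q \<in> global_states \<N>. \<exists>q'. (q, q') \<in> \<tau>) \<and>
     (\<forall>(q, q') \<in> \<tau>. \<forall>a \<in> agents \<N> - S. q a = q' a)"

definition T :: "('a, 's, 'n, 'r) negotiation \<Rightarrow> ('n \<times> 'a \<times> 'r) set" where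
  "T \<N> = {(n, a, r). n \<in> atoms \<N> \<and> a \<in> parties \<N> n \<and> r \<in> outcomes \<N> n}"

definition negotiation :: "('a, 's, 'n, 'r) negotiation \<Rightarrow> bool" where
  "negotiation \<N> \<longleftrightarrow>
     finite (agents \<N>) \<and> agents \<N> \<noteq> {} \<and>
     (\<forall>a \<in> agents \<N>. states \<N> a \<noteq> {}) \<and>
     finite (atoms \<N>) \<and> init \<N> \<in> atoms \<N> \<and> fin \<N> \<in> atoms \<N> \<and>
     (\<forall>n \<in> atoms \<N>.
        parties \<N> n \<noteq> {} \<and> parties \<N> n \<subseteq> agents \<N> \<and>
        finite (outcomes \<N> n) \<and> outcomes \<N> n \<noteq> {} \<and>
        (\<forall>r \<in> outcomes \<N> n. is_transformer \<N> (parties \<N> n) (trans \<N> n r))) \<and>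
     parties \<N> (init \<N>) = agents \<N> \<and> parties \<N> (fin \<N>) = agents \<N> \<and>
     (\<forall>(n, a, r) \<in> T \<N>. succ \<N> n a r \<subseteq> atoms \<N> \<and>
        (succ \<N> n a r = {} \<longleftrightarrow> n = fin \<N>))"

definition graph :: "('a, 's, 'n, 'r) negotiation \<Rightarrow> ('n \<times> 'n) set" where
  "graph \<N> = {(n, n'). \<exists>a r. (n, a, r) \<in> T \<N> \<and> n' \<in> succ \<N> n a r}"

definition acyclic_neg :: "('a, 's, 'n, 'r) negotiation \<Rightarrow> bool" where
  "acyclic_neg \<N> \<longleftrightarrow> acyclic (graph \<N>)"

text \<open>Markings. Agents outside A always carry the empty set.\<close>

definition x0 :: "('a, 's, 'n, 'r) negotiation \<Rightarrow> 'a \<Rightarrow> 'n set" where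
  "x0 \<N> = (\<lambda>a. if a \<in> agents \<N> then {init \<N>} else {})"

definition xf :: "'a \<Rightarrow> 'n set" where
  "xf = (\<lambda>a. {})"

definition enables :: "('a, 's, 'n, 'r) negotiation \<Rightarrow> ('a \<Rightarrow> 'n set) \<Rightarrow> 'n \<Rightarrow> bool" where
  "enables \<N> x n \<longleftrightarrow> (\<forall>a \<in> parties \<N> n. n \<in> x a)"

definition step :: "('a, 's, 'n, 'r) negotiation \<Rightarrow> ('a \<Rightarrow> 'n set) \<Rightarrow> 'n \<times> 'r \<Rightarrow> ('a \<Rightarrow> 'n set) \<Rightarrow> bool" where
  "step \<N> x nr x' \<longleftrightarrow> (case nr of (n, r) \<Rightarrow>
     n \<in> atoms \<N> \<and> r \<in> outcomes \<N> n \<and> enables \<N> x n \<and>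
     x' = (\<lambda>a. if a \<in> parties \<N> n then succ \<N> n a r else x a))"

inductive run :: "('a, 's, 'n, 'r) negotiation \<Rightarrow> ('a \<Rightarrow> 'n set) \<Rightarrow> ('n \<times> 'r) list \<Rightarrow> ('a \<Rightarrow> 'n set) \<Rightarrow> bool"
  for \<N> where
  run_Nil: "run \<N> x [] x"
| run_Cons: "step \<N> x s y \<Longrightarrow> run \<N> y \<sigma> z \<Longrightarrow> run \<N> x (s # \<sigma>) z"

definition reachable :: "('a, 's, 'n, 'r) negotiation \<Rightarrow> ('a \<Rightarrow> 'n set) \<Rightarrow> bool" where
  "reachable \<N> x \<longleftrightarrow> (\<exists>\<sigma>. run \<N> (x0 \<N>) \<sigma> x)"

definition sound :: "('a, 's, 'n, 'r) negotiation \<Rightarrow> bool" where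
  "sound \<N> \<longleftrightarrow>
     (\<forall>n \<in> atoms \<N>. \<exists>x. reachable \<N> x \<and> enables \<N> x n) \<and>
     (\<forall>\<sigma> x. run \<N> (x0 \<N>) \<sigma> x \<longrightarrow> (\<exists>\<sigma>'. run \<N> x \<sigma>' xf))"

definition deterministic_agent :: "('a, 's, 'n, 'r) negotiation \<Rightarrow> 'a \<Rightarrow> bool" where
  "deterministic_agent \<N> a \<longleftrightarrow>
     (\<forall>n r. (n, a, r) \<in> T \<N> \<and> n \<noteq> fin \<N> \<longrightarrow> (\<exists>n'. succ \<N> n a r = {n'}))"

definition deterministic :: "('a, 's, 'n, 'r) negotiation \<Rightarrow> bool" where
  "deterministic \<N> \<longleftrightarrow> (\<forall>a \<in> agents \<N>. deterministic_agent \<N> a)"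

definition SDAN :: "('a, 's, 'n, 'r) negotiation \<Rightarrow> bool" where
  "SDAN \<N> \<longleftrightarrow> negotiation \<N> \<and> sound \<N> \<and> deterministic \<N> \<and> acyclic_neg \<N>"

text \<open>Guards of the reduction rules (a rule can be applied iff its guard holds).\<close>

definition merge_guard :: "('a, 's, 'n, 'r) negotiation \<Rightarrow> bool" where
  "merge_guard \<N> \<longleftrightarrow>
     (\<exists>n \<in> atoms \<N>. \<exists>r1 \<in> outcomes \<N> n. \<exists>r2 \<in> outcomes \<N> n.
        r1 \<noteq> r2 \<and> (\<forall>a \<in> parties \<N> n. succ \<N> n a r1 = succ \<N> n a r2))"

definition uncond_enables :: "('a, 's, 'n, 'r) negotiation \<Rightarrow> 'n \<Rightarrow> 'r \<Rightarrow> 'n \<Rightarrow> bool" where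
  "uncond_enables \<N> n r n' \<longleftrightarrow>
     parties \<N> n' \<subseteq> parties \<N> n \<and> (\<forall>a \<in> parties \<N> n'. succ \<N> n a r = {n'})"

definition dshortcut_guard :: "('a, 's, 'n, 'r) negotiation \<Rightarrow> bool" where
  "dshortcut_guard \<N> \<longleftrightarrow>
     (\<exists>n \<in> atoms \<N>. \<exists>n' \<in> atoms \<N>. \<exists>r \<in> outcomes \<N> n.
        n \<noteq> n' \<and> uncond_enables \<N> n r n' \<and> card (outcomes \<N> n') \<le> 1 \<and>
        ((\<exists>(m, b, s) \<in> T \<N>. m \<noteq> n \<and> n' \<in> succ \<N> m b s) \<longrightarrow>
         (\<exists>(m, b, s) \<in> T \<N>. m \<noteq> n \<and> succ \<N> m b s = {n'})))"

definition irreducible :: "('a, 's, 'n, 'r) negotiation \<Rightarrow> bool" where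
  "irreducible \<N> \<longleftrightarrow> SDAN \<N> \<and> \<not> merge_guard \<N> \<and> \<not> dshortcut_guard \<N>"

end

theory Submission
  imports Defs
begin

text \<open>
  Suppose an atom m that is neither final nor global (some agent is not a party) has two outcomes,
  and pick such an m enabled at a reachable marking z of minimal potential: the number of atoms
  still reachable in the graph from the agents' tokens, which every step decreases because the
  negotiation is acyclic. After either outcome r of m, soundness continues the run to the final
  atom, and by minimality the first atom on the way that is not local (local: not global, one
  outcome) is global, so all agents meet there. Since the d-shortcut rule does not apply, a local
  atom cannot receive all its tokens from the outcome (m, r); tracing tokens, every local atom fired
  after one outcome is therefore also fired after the other. An agent outside m then forces both
  continuations to meet at the same global atom, and an agent of m whose successors after the two
  outcomes differ (it exists since the merge rule does not apply) yields a cycle.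
\<close>

lemma run_Nil_iff [simp]: "run N x [] z \<longleftrightarrow> z = x"
  by (auto intro: run_Nil elim: run.cases)

lemma run_Cons_iff [simp]: "run N x (p # \<sigma>) z \<longleftrightarrow> (\<exists>y. step N x p y \<and> run N y \<sigma> z)"
  by (auto intro: run_Cons elim: run.cases)

lemma run_append: "run N x (\<alpha> @ \<beta>) z \<longleftrightarrow> (\<exists>y. run N x \<alpha> y \<and> run N y \<beta> z)"
  by (induction \<alpha> arbitrary: x) auto

lemma reachable_run: "reachable N x \<Longrightarrow> run N x \<sigma> y \<Longrightarrow> reachable N y"
  unfolding reachable_def by (metis run_append)

definition fire ::
  "('a, 's, 'n, 'r) negotiation \<Rightarrow> ('a \<Rightarrow> 'n set) \<Rightarrow> 'n \<Rightarrow> 'r \<Rightarrow> 'a \<Rightarrow> 'n set" where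
  "fire N x k s = (\<lambda>a. if a \<in> parties N k then succ N k a s else x a)"

lemma step_iff [simp]:
  "step N x (k, s) x' \<longleftrightarrow> k \<in> atoms N \<and> s \<in> outcomes N k \<and> enables N x k \<and> x' = fire N x k s"
  by (simp add: step_def fire_def)

lemma T_iff [simp]: "(k, b, s) \<in> T N \<longleftrightarrow> k \<in> atoms N \<and> b \<in> parties N k \<and> s \<in> outcomes N k"
  by (simp add: T_def)

lemma negotiation_atomD:
  assumes "negotiation N" "k \<in> atoms N"
  shows "parties N k \<noteq> {}" "parties N k \<subseteq> agents N" "finite (outcomes N k)"
  using assms by (simp_all add: negotiation_def)

lemma negotiation_fin_parties: "negotiation N \<Longrightarrow> parties N (fin N) = agents N"
  by (simp add: negotiation_def)

lemma succ_subset_atoms: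
  "negotiation N \<Longrightarrow> (k, b, s) \<in> T N \<Longrightarrow> succ N k b s \<subseteq> atoms N"
  unfolding negotiation_def by fast

lemma succ_empty_iff:
  "negotiation N \<Longrightarrow> (k, b, s) \<in> T N \<Longrightarrow> succ N k b s = {} \<longleftrightarrow> k = fin N"
  unfolding negotiation_def by fast

lemma succ_singleton:
  assumes "negotiation N" "deterministic N" "(k, b, s) \<in> T N" "k \<noteq> fin N"
  shows "\<exists>k'. succ N k b s = {k'}"
proof -
  have "b \<in> agents N"
    using assms(3) negotiation_atomD(2)[OF assms(1)] by auto
  then show ?thesis
    using assms(2-4) unfolding deterministic_def deterministic_agent_def by blast
qed

lemma irreducibleD:
  assumes "irreducible N"
  shows "negotiation N" "sound N" "deterministic N" "acyclic (graph N)" "\<not> merge_guard N"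
    "\<not> dshortcut_guard N"
  using assms unfolding irreducible_def SDAN_def acyclic_neg_def by simp_all

definition single_tokens :: "('a \<Rightarrow> 'n set) \<Rightarrow> bool" where
  "single_tokens x \<longleftrightarrow> (\<forall>b. x b = {} \<or> (\<exists>k. x b = {k}))"

lemma single_tokens_fire:
  assumes "negotiation N" "deterministic N" "k \<in> atoms N" "s \<in> outcomes N k" "single_tokens x"
  shows "single_tokens (fire N x k s)"
  unfolding single_tokens_def
proof
  fix b
  show "fire N x k s b = {} \<or> (\<exists>k'. fire N x k s b = {k'})"
  proof (cases "b \<in> parties N k")
    case True
    then have "(k, b, s) \<in> T N" using assms(3,4) by simp
    then show ?thesis
      using True succ_singleton[OF assms(1,2)] succ_empty_iff[OF assms(1)]
      by (cases "k = fin N") (auto simp: fire_def)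
  qed (use assms(5) in \<open>auto simp: fire_def single_tokens_def\<close>)
qed

lemma single_tokens_run:
  assumes "negotiation N" "deterministic N"
  shows "run N x \<sigma> y \<Longrightarrow> single_tokens x \<Longrightarrow> single_tokens y"
proof (induction rule: run.induct)
  case (run_Cons x p y \<sigma> z)
  then show ?case
    using single_tokens_fire[OF assms] by (cases p) auto
qed

lemma reachable_single_tokens:
  assumes "negotiation N" "deterministic N" "reachable N x"
  shows "single_tokens x"
proof -
  have "single_tokens (x0 N)" unfolding single_tokens_def x0_def by auto
  then show ?thesis using assms single_tokens_run unfolding reachable_def by blast
qed

lemma enabled_token: "single_tokens x \<Longrightarrow> enables N x k \<Longrightarrow> c \<in> parties N k \<Longrightarrow> x c = {k}"
  unfolding single_tokens_def enables_def by fastforce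

lemma graphI: "(k, b, s) \<in> T N \<Longrightarrow> k' \<in> succ N k b s \<Longrightarrow> (k, k') \<in> graph N"
  unfolding graph_def by blast

lemma graph_subset: "negotiation N \<Longrightarrow> graph N \<subseteq> atoms N \<times> atoms N"
  unfolding graph_def using succ_subset_atoms by fastforce

definition potential :: "('a, 's, 'n, 'r) negotiation \<Rightarrow> ('a \<Rightarrow> 'n set) \<Rightarrow> nat" where
  "potential N x = (\<Sum>b\<in>agents N. card ((graph N)\<^sup>* `` x b))"

lemma potential_step_less:
  assumes neg: "negotiation N" and acy: "acyclic (graph N)"
    and st: "step N x (k, s) x'" and sg: "single_tokens x"
  shows "potential N x' < potential N x"
proof -
  have k: "k \<in> atoms N" "s \<in> outcomes N k" "enables N x k" and x': "x' = fire N x k s"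
    using st by auto
  have fin: "finite ((graph N)\<^sup>+ `` {k})"
    using trancl_subset_Sigma[OF graph_subset[OF neg]] neg
    by (auto simp: negotiation_def intro: finite_subset)
  have k_notin: "k \<notin> (graph N)\<^sup>+ `` {k}"
    using acy unfolding acyclic_def by blast
  have less: "card ((graph N)\<^sup>* `` x' b) < card ((graph N)\<^sup>* `` x b)" if b: "b \<in> parties N k" for b
  proof -
    have "(k, k') \<in> graph N" if "k' \<in> succ N k b s" for k'
      using graphI[of k b s N k'] k b that by simp
    then have "(graph N)\<^sup>* `` x' b \<subseteq> (graph N)\<^sup>+ `` {k}"
      using b x' by (auto simp: fire_def intro: rtrancl_into_trancl2)
    then have "card ((graph N)\<^sup>* `` x' b) \<le> card ((graph N)\<^sup>+ `` {k})"
      using fin by (rule card_mono[rotated])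
    moreover have "(graph N)\<^sup>* `` x b = insert k ((graph N)\<^sup>+ `` {k})"
      using enabled_token[OF sg k(3) b] by (auto dest: rtranclD intro: trancl_into_rtrancl)
    ultimately show ?thesis
      using fin k_notin by simp
  qed
  obtain b0 where "b0 \<in> parties N k" using negotiation_atomD(1)[OF neg k(1)] by blast
  then show ?thesis
    unfolding potential_def using negotiation_atomD(2)[OF neg k(1)] neg less x'
    by (intro sum_strict_mono_ex1) (auto simp: negotiation_def fire_def less_imp_le)
qed

lemma potential_run_le:
  assumes "negotiation N" "deterministic N" "acyclic (graph N)"
  shows "run N x \<sigma> y \<Longrightarrow> single_tokens x \<Longrightarrow> potential N y \<le> potential N x"
proof (induction rule: run.induct)
  case (run_Cons x p y \<sigma> z)
  obtain k s where p: "p = (k, s)" by (cases p)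
  with run_Cons.hyps(1) have "step N x (k, s) y" by simp
  with run_Cons show ?case
    using potential_step_less[OF assms(1,3)] single_tokens_fire[OF assms(1,2)]
    by (metis less_imp_le order_trans step_iff)
qed simp

definition consumed_or_kept ::
  "('a, 's, 'n, 'r) negotiation \<Rightarrow> ('n \<times> 'r) list \<Rightarrow> ('a \<Rightarrow> 'n set) \<Rightarrow> 'a \<Rightarrow> 'n \<Rightarrow> bool"
where
  "consumed_or_kept N \<alpha> y b k \<longleftrightarrow> y b = {k} \<or> (\<exists>s. (k, s) \<in> set \<alpha> \<and> b \<in> parties N k)"

lemma run_consumed_or_kept:
  "run N x \<alpha> y \<Longrightarrow> x b = {k} \<Longrightarrow> consumed_or_kept N \<alpha> y b k"
proof (induction rule: run.induct)
  case (run_Cons x p y \<sigma> z)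
  obtain k' s where p: "p = (k', s)" by (cases p)
  show ?case
  proof (cases "b \<in> parties N k'")
    case True
    then have "k' = k" using run_Cons.hyps(1) run_Cons.prems p by (auto simp: enables_def)
    then show ?thesis using p True by (auto simp: consumed_or_kept_def)
  next
    case False
    then have "y b = x b" using run_Cons.hyps(1) p by (simp add: fire_def)
    then show ?thesis using run_Cons by (auto simp: consumed_or_kept_def)
  qed
qed (simp add: consumed_or_kept_def)

lemma run_successor_consumed_or_kept:
  assumes "run N x \<alpha> y" "(k, s) \<in> set \<alpha>" "c \<in> parties N k" "succ N k c s = {k'}"
  shows "consumed_or_kept N \<alpha> y c k'"
proof -
  obtain \<gamma> \<delta> where \<alpha>: "\<alpha> = \<gamma> @ (k, s) # \<delta>" using split_list[OF assms(2)] by blast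
  then obtain w where "run N (fire N w k s) \<delta> y"
    using assms(1) by (auto simp: run_append)
  then have "consumed_or_kept N \<delta> y c k'"
    using assms(3,4) by (auto simp: fire_def intro: run_consumed_or_kept)
  then show ?thesis using \<alpha> by (auto simp: consumed_or_kept_def)
qed

lemma run_party_reached_from_token:
  "run N x \<delta> y \<Longrightarrow> (k', s) \<in> set \<delta> \<Longrightarrow> b \<in> parties N k' \<Longrightarrow>
   \<exists>k\<in>x b. k' = k \<or> (k \<in> fst ` set \<delta> \<and> (k, k') \<in> (graph N)\<^sup>+)"
proof (induction rule: run.induct)
  case (run_Cons x p y \<sigma> z)
  obtain k1 s1 where p: "p = (k1, s1)" by (cases p)
  from run_Cons.hyps(1) p have st: "k1 \<in> atoms N" "s1 \<in> outcomes N k1" "enables N x k1"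
    "y = fire N x k1 s1" by auto
  show ?case
  proof (cases "(k', s) = p")
    case True
    then show ?thesis using st(3) run_Cons.prems(2) p unfolding enables_def by auto
  next
    case False
    then obtain k2 where k2: "k2 \<in> y b" "k' = k2 \<or> (k2 \<in> fst ` set \<sigma> \<and> (k2, k') \<in> (graph N)\<^sup>+)"
      using run_Cons by auto
    show ?thesis
    proof (cases "b \<in> parties N k1")
      case True
      then have "(k1, k2) \<in> graph N"
        using k2(1) st graphI[of k1 b s1 N k2] by (simp add: fire_def)
      moreover have "k1 \<in> x b" using st(3) True unfolding enables_def by auto
      ultimately show ?thesis using k2(2) p by force
    next
      case False
      then show ?thesis using k2 st(4) by (auto simp: fire_def)
    qed
  qed
qed simp

lemma run_losing_token_fires_fin:
  assumes "negotiation N"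
  shows "run N x \<alpha> y \<Longrightarrow> x c \<noteq> {} \<Longrightarrow> y c = {} \<Longrightarrow> \<exists>s. (fin N, s) \<in> set \<alpha>"
proof (induction rule: run.induct)
  case (run_Cons x p y \<sigma> z)
  obtain k s where p: "p = (k, s)" by (cases p)
  show ?case
  proof (cases "k = fin N")
    case False
    then have "y c \<noteq> {}"
      using run_Cons.hyps(1) run_Cons.prems(1) p succ_empty_iff[OF assms, of k c s]
      by (auto simp: fire_def)
    then show ?thesis using run_Cons by auto
  qed (use p in auto)
qed simp

lemma irreducible_not_uncond_enables:
  assumes irr: "irreducible N" and n: "n \<in> atoms N" "r \<in> outcomes N n"
    and k: "k \<in> atoms N" "card (outcomes N k) \<le> 1"
  shows "\<not> uncond_enables N n r k"
proof
  assume ue: "uncond_enables N n r k"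
  note neg = irreducibleD(1)[OF irr]
  obtain c where c: "c \<in> parties N k" using negotiation_atomD(1)[OF neg k(1)] by blast
  then have "(n, k) \<in> graph N"
    using ue n graphI[of n c r N k] unfolding uncond_enables_def by auto
  then have "n \<noteq> k" using irreducibleD(4)[OF irr] unfolding acyclic_def by blast
  moreover have "\<exists>(m, b, s) \<in> T N. m \<noteq> n \<and> succ N m b s = {k}"
    if m: "(m, b, s) \<in> T N" "m \<noteq> n" "k \<in> succ N m b s" for m b s
  proof -
    have "m \<noteq> fin N" using m(3) succ_empty_iff[OF neg m(1)] by auto
    then obtain k' where "succ N m b s = {k'}"
      using succ_singleton[OF neg irreducibleD(3)[OF irr] m(1)] by blast
    then show ?thesis using m by (intro bexI[of _ "(m, b, s)"]) auto
  qed
  ultimately have "dshortcut_guard N"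
    unfolding dshortcut_guard_def using n k ue by blast
  with irreducibleD(6)[OF irr] show False ..
qed

definition local_atom :: "('a, 's, 'n, 'r) negotiation \<Rightarrow> 'n \<Rightarrow> bool" where
  "local_atom N k \<longleftrightarrow> \<not> agents N \<subseteq> parties N k \<and> card (outcomes N k) \<le> 1"

lemma local_atom_outcome_unique:
  assumes "negotiation N" "k \<in> atoms N" "local_atom N k" "s \<in> outcomes N k" "s' \<in> outcomes N k"
  shows "s' = s"
  using assms card_le_Suc0_iff_eq[OF negotiation_atomD(3)[OF assms(1,2)]]
  unfolding local_atom_def by auto

definition sync_run ::
  "('a, 's, 'n, 'r) negotiation \<Rightarrow> ('a \<Rightarrow> 'n set) \<Rightarrow> ('n \<times> 'r) list \<Rightarrow> ('a \<Rightarrow> 'n set) \<Rightarrow> 'n \<Rightarrow> bool"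
where
  "sync_run N x \<alpha> y F \<longleftrightarrow> run N x \<alpha> y \<and> (\<forall>(k, s) \<in> set \<alpha>. local_atom N k) \<and>
     agents N \<subseteq> parties N F \<and> (\<forall>c \<in> agents N. y c = {F})"

lemma sync_run_exists:
  assumes irr: "irreducible N" and reach: "reachable N x" and c: "x c \<noteq> {}"
    and global: "\<And>\<alpha> y F. run N x \<alpha> y \<Longrightarrow> F \<in> atoms N \<Longrightarrow> enables N y F \<Longrightarrow> F \<noteq> fin N \<Longrightarrow>
      1 < card (outcomes N F) \<Longrightarrow> agents N \<subseteq> parties N F"
  shows "\<exists>\<alpha> y F. sync_run N x \<alpha> y F"
proof -
  note neg = irreducibleD(1)[OF irr] and det = irreducibleD(3)[OF irr]
  obtain \<sigma> where \<sigma>: "run N x \<sigma> xf"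
    using reach irreducibleD(2)[OF irr] unfolding sound_def reachable_def by blast
  then obtain s where "(fin N, s) \<in> set \<sigma>"
    using run_losing_token_fires_fin[OF neg] c unfolding xf_def by blast
  moreover have "\<not> local_atom N (fin N)"
    using negotiation_fin_parties[OF neg] unfolding local_atom_def by simp
  ultimately have "\<exists>p \<in> set \<sigma>. \<not> local_atom N (fst p)" by force
  from split_list_first_prop[OF this]
  obtain \<alpha> p \<beta> where split: "\<sigma> = \<alpha> @ p # \<beta>" "\<not> local_atom N (fst p)"
    and \<alpha>: "\<forall>p \<in> set \<alpha>. local_atom N (fst p)"
    by blast
  obtain F sF where p: "p = (F, sF)" by (cases p)
  obtain y where y: "run N x \<alpha> y" "F \<in> atoms N" "enables N y F"
    using \<sigma> split(1) p by (auto simp: run_append)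
  have full: "agents N \<subseteq> parties N F"
  proof (rule ccontr)
    assume not_full: "\<not> agents N \<subseteq> parties N F"
    then have "F \<noteq> fin N" using negotiation_fin_parties[OF neg] by auto
    moreover have "1 < card (outcomes N F)"
      using split(2) p not_full unfolding local_atom_def by simp
    ultimately show False using global[OF y] not_full by blast
  qed
  have "single_tokens y"
    using reachable_single_tokens[OF neg det reachable_run[OF reach y(1)]] .
  then have "\<forall>c \<in> agents N. y c = {F}"
    using enabled_token[OF _ y(3)] full by blast
  then have "sync_run N x \<alpha> y F"
    unfolding sync_run_def using y(1) \<alpha> full by auto
  then show ?thesis by blast
qed

lemma run_steps_valid:
  "run N x \<alpha> y \<Longrightarrow> (k, s) \<in> set \<alpha> \<Longrightarrow> k \<in> atoms N \<and> s \<in> outcomes N k"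
  by (induction rule: run.induct) auto

definition covered :: "('a, 's, 'n, 'r) negotiation \<Rightarrow> 'n \<Rightarrow> 'r \<Rightarrow> ('n \<times> 'r) list \<Rightarrow>
    ('a \<Rightarrow> 'n set) \<Rightarrow> ('a \<Rightarrow> 'n set) \<Rightarrow> bool" where
  "covered N n r \<alpha> y u \<longleftrightarrow> (\<forall>b \<in> agents N. \<forall>k. u b = {k} \<longrightarrow>
     (b \<in> parties N n \<and> succ N n b r = {k}) \<or> consumed_or_kept N \<alpha> y b k)"

lemma fire_covered:
  assumes "run N (fire N z n r') \<alpha> y"
  shows "covered N n r \<alpha> y (fire N z n r)"
  unfolding covered_def
proof (intro ballI allI impI)
  fix b k assume "fire N z n r b = {k}"
  then show "(b \<in> parties N n \<and> succ N n b r = {k}) \<or> consumed_or_kept N \<alpha> y b k"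
    using run_consumed_or_kept[OF assms, of b k] by (cases "b \<in> parties N n") (auto simp: fire_def)
qed

context
  fixes N :: "('a, 's, 'n, 'r) negotiation" and n r x2 \<alpha>2 y2 F2
  assumes irr: "irreducible N" and n: "n \<in> atoms N" "r \<in> outcomes N n"
    and sync: "sync_run N x2 \<alpha>2 y2 F2"
begin

lemma covered_enabled_atom_fired:
  assumes sg: "single_tokens u" and cov: "covered N n r \<alpha>2 y2 u"
    and k: "k \<in> atoms N" "enables N u k" "local_atom N k"
  shows "k \<in> fst ` set \<alpha>2"
proof (rule ccontr)
  assume k_new: "k \<notin> fst ` set \<alpha>2"
  txt \<open>Otherwise (n, r) would unconditionally enable the local atom k, a d-shortcut.\<close>
  have "c \<in> parties N n \<and> succ N n c r = {k}" if c: "c \<in> parties N k" for c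
  proof -
    have cA: "c \<in> agents N" using c negotiation_atomD(2)[OF irreducibleD(1)[OF irr] k(1)] by blast
    have "y2 c = {F2}" "agents N \<subseteq> parties N F2" using sync cA unfolding sync_run_def by auto
    then have "\<not> consumed_or_kept N \<alpha>2 y2 c k"
      using k_new k(3) unfolding consumed_or_kept_def local_atom_def by force
    then show ?thesis using cov cA enabled_token[OF sg k(2) c] unfolding covered_def by blast
  qed
  then have "uncond_enables N n r k" unfolding uncond_enables_def by blast
  then show False
    using irreducible_not_uncond_enables[OF irr n k(1)] k(3) unfolding local_atom_def by blast
qed

lemma covered_step:
  assumes st: "step N u (k, s) u'" and sg: "single_tokens u" and loc: "local_atom N k"
    and cov: "covered N n r \<alpha>2 y2 u"
  shows "k \<in> fst ` set \<alpha>2 \<and> covered N n r \<alpha>2 y2 u'"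
proof
  note neg = irreducibleD(1)[OF irr]
  have k: "k \<in> atoms N" "s \<in> outcomes N k" "enables N u k" and u': "u' = fire N u k s"
    using st by auto
  show fired: "k \<in> fst ` set \<alpha>2"
    using covered_enabled_atom_fired[OF sg cov k(1,3) loc] .
  then obtain s' where s': "(k, s') \<in> set \<alpha>2" by force
  have run2: "run N x2 \<alpha>2 y2" using sync unfolding sync_run_def by blast
  have "s' = s"
    using local_atom_outcome_unique[OF neg k(1) loc k(2)] run_steps_valid[OF run2 s'] by blast
  show "covered N n r \<alpha>2 y2 u'"
    unfolding covered_def
  proof (intro ballI allI impI)
    fix b k' assume b: "b \<in> agents N" and u'b: "u' b = {k'}"
    show "(b \<in> parties N n \<and> succ N n b r = {k'}) \<or> consumed_or_kept N \<alpha>2 y2 b k'"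
    proof (cases "b \<in> parties N k")
      case True
      then have "succ N k b s' = {k'}" using u'b u' \<open>s' = s\<close> by (simp add: fire_def)
      then show ?thesis using run_successor_consumed_or_kept[OF run2 s' True] by blast
    next
      case False
      then show ?thesis using cov b u'b u' unfolding covered_def by (simp add: fire_def)
    qed
  qed
qed

lemma covered_run:
  "run N u \<delta> y \<Longrightarrow> single_tokens u \<Longrightarrow> \<forall>(k, s) \<in> set \<delta>. local_atom N k \<Longrightarrow>
   covered N n r \<alpha>2 y2 u \<Longrightarrow> fst ` set \<delta> \<subseteq> fst ` set \<alpha>2 \<and> covered N n r \<alpha>2 y2 y"
proof (induction rule: run.induct)
  case (run_Cons u p u' \<sigma> y)
  obtain k s where p: "p = (k, s)" by (cases p)
  with run_Cons.prems run_Cons.hyps(1) have "k \<in> fst ` set \<alpha>2" "covered N n r \<alpha>2 y2 u'"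
    using covered_step by auto
  moreover have "single_tokens u'"
    using run_Cons.hyps(1) run_Cons.prems(1) p irreducibleD(1,3)[OF irr]
    by (auto intro: single_tokens_fire)
  ultimately show ?case using run_Cons.IH run_Cons.prems(2) p by auto
qed simp

end

lemma sync_run_final_not_fired: "sync_run N x \<alpha> y F \<Longrightarrow> F \<notin> fst ` set \<alpha>"
  unfolding sync_run_def local_atom_def by fastforce

lemma sync_run_consumed_or_kept:
  assumes "sync_run N x \<alpha> y F" "c \<in> agents N" "consumed_or_kept N \<alpha> y c k"
  shows "k = F \<or> (k \<in> fst ` set \<alpha> \<and> c \<in> parties N k)"
  using assms unfolding sync_run_def consumed_or_kept_def by force

lemma branches_agree:
  assumes irr: "irreducible N" and m: "m \<in> atoms N" "m \<noteq> fin N" "enables N z m"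
    and sg: "single_tokens z" and r: "r1 \<in> outcomes N m" "r2 \<in> outcomes N m"
    and b: "b \<in> agents N" "b \<notin> parties N m" and a: "a \<in> parties N m"
    and sync1: "sync_run N (fire N z m r1) \<alpha>1 y1 F1"
    and sync2: "sync_run N (fire N z m r2) \<alpha>2 y2 F2"
  shows "succ N m a r1 = succ N m a r2"
proof (rule ccontr)
  assume differ: "succ N m a r1 \<noteq> succ N m a r2"
  note neg = irreducibleD(1)[OF irr] and det = irreducibleD(3)[OF irr]
  have run1: "run N (fire N z m r1) \<alpha>1 y1" and run2: "run N (fire N z m r2) \<alpha>2 y2"
    using sync1 sync2 unfolding sync_run_def by blast+
  have "single_tokens (fire N z m r1)" "single_tokens (fire N z m r2)"
    using single_tokens_fire[OF neg det m(1) _ sg] r by blast+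
  then have V: "fst ` set \<alpha>1 = fst ` set \<alpha>2" and cov1: "covered N m r1 \<alpha>2 y2 y1"
    using covered_run[OF irr m(1) r(1) sync2 run1] covered_run[OF irr m(1) r(2) sync1 run2]
      fire_covered[OF run1] fire_covered[OF run2] sync1 sync2
    unfolding sync_run_def by auto
  have "consumed_or_kept N \<alpha>2 y2 b F1"
    using cov1 b sync1 unfolding covered_def sync_run_def by auto
  then have F: "F1 = F2"
    using sync_run_consumed_or_kept[OF sync2 b(1)] sync_run_final_not_fired[OF sync1] V by auto
  obtain m1 m2 where m1: "succ N m a r1 = {m1}" and m2: "succ N m a r2 = {m2}"
    using succ_singleton[OF neg det _ m(2)] m(1) a r by (metis T_iff)
  have z1: "fire N z m r1 a = {m1}" and z2: "fire N z m r2 a = {m2}"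
    using a m1 m2 by (simp_all add: fire_def)
  have aA: "a \<in> agents N" using a negotiation_atomD(2)[OF neg m(1)] by blast
  have "m1 = F1 \<or> (m1 \<in> fst ` set \<alpha>1 \<and> a \<in> parties N m1)"
    and "m2 = F2 \<or> (m2 \<in> fst ` set \<alpha>2 \<and> a \<in> parties N m2)"
    using sync_run_consumed_or_kept[OF sync1 aA run_consumed_or_kept[OF run1 z1]]
      sync_run_consumed_or_kept[OF sync2 aA run_consumed_or_kept[OF run2 z2]] by blast+
  moreover have "m1 \<in> fst ` set \<alpha>1 \<and> (m1, m2) \<in> (graph N)\<^sup>+"
    if "m2 \<in> fst ` set \<alpha>1" "a \<in> parties N m2"
    using that run_party_reached_from_token[OF run1 _ that(2)] z1 differ m1 m2 by force
  moreover have "m2 \<in> fst ` set \<alpha>2 \<and> (m2, m1) \<in> (graph N)\<^sup>+"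
    if "m1 \<in> fst ` set \<alpha>2" "a \<in> parties N m1"
    using that run_party_reached_from_token[OF run2 _ that(2)] z2 differ m1 m2 by force
  moreover have "(m1, m1) \<notin> (graph N)\<^sup>+"
    using irreducibleD(4)[OF irr] unfolding acyclic_def by blast
  ultimately show False
    using F V differ m1 m2 sync_run_final_not_fired[OF sync1]
    by (metis trancl_trans)
qed

lemma fire_sync_run_exists:
  assumes irr: "irreducible N" and z: "reachable N z" "enables N z m"
    and m: "m \<in> atoms N" "m \<noteq> fin N" "r \<in> outcomes N m"
    and global: "\<And>y F. potential N y < potential N z \<Longrightarrow> reachable N y \<Longrightarrow> enables N y F \<Longrightarrow>
      F \<in> atoms N \<Longrightarrow> F \<noteq> fin N \<Longrightarrow> 1 < card (outcomes N F) \<Longrightarrow> agents N \<subseteq> parties N F"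
  shows "\<exists>\<alpha> y F. sync_run N (fire N z m r) \<alpha> y F"
proof -
  note neg = irreducibleD(1)[OF irr] and det = irreducibleD(3)[OF irr]
    and acy = irreducibleD(4)[OF irr]
  have sg: "single_tokens z" using reachable_single_tokens[OF neg det z(1)] .
  have st: "step N z (m, r) (fire N z m r)" using z(2) m by simp
  then have reach: "reachable N (fire N z m r)"
    using reachable_run[OF z(1), of "[(m, r)]"] by auto
  obtain c where c: "c \<in> parties N m" using negotiation_atomD(1)[OF neg m(1)] by blast
  then have "fire N z m r c \<noteq> {}"
    using succ_empty_iff[OF neg, of m c r] m by (simp add: fire_def)
  then show ?thesis
  proof (rule sync_run_exists[OF irr reach])
    fix \<alpha> y F
    assume run: "run N (fire N z m r) \<alpha> y"
    have "potential N y \<le> potential N (fire N z m r)"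
      using potential_run_le[OF neg det acy run] single_tokens_fire[OF neg det m(1,3) sg] .
    also have "\<dots> < potential N z" using potential_step_less[OF neg acy st sg] .
    finally show "F \<in> atoms N \<Longrightarrow> enables N y F \<Longrightarrow> F \<noteq> fin N \<Longrightarrow> 1 < card (outcomes N F) \<Longrightarrow>
      agents N \<subseteq> parties N F"
      using global reachable_run[OF reach run] by blast
  qed
qed

lemma enabled_branching_atom_global:
  assumes irr: "irreducible N"
  shows "reachable N z \<Longrightarrow> enables N z m \<Longrightarrow> m \<in> atoms N \<Longrightarrow> m \<noteq> fin N \<Longrightarrow>
    1 < card (outcomes N m) \<Longrightarrow> agents N \<subseteq> parties N m"
proof (induction "potential N z" arbitrary: z m rule: less_induct)
  case less
  show ?case
  proof (rule ccontr)
    assume "\<not> agents N \<subseteq> parties N m"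
    then obtain b where b: "b \<in> agents N" "b \<notin> parties N m" by blast
    obtain r1 r2 where r: "r1 \<in> outcomes N m" "r2 \<in> outcomes N m" "r1 \<noteq> r2"
      using less.prems(5) irreducibleD(1)[OF irr] less.prems(3)
        card_le_Suc0_iff_eq[OF negotiation_atomD(3)] by force
    have "\<exists>\<alpha> y F. sync_run N (fire N z m r) \<alpha> y F" if "r \<in> outcomes N m" for r
      by (rule fire_sync_run_exists[OF irr less.prems(1-4) that]) (rule less.hyps)
    then obtain \<alpha>1 y1 F1 \<alpha>2 y2 F2 where "sync_run N (fire N z m r1) \<alpha>1 y1 F1"
      "sync_run N (fire N z m r2) \<alpha>2 y2 F2"
      using r by meson
    then have "\<forall>a \<in> parties N m. succ N m a r1 = succ N m a r2"
      using branches_agree[OF irr less.prems(3,4,2) _ r(1,2) b]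
        reachable_single_tokens[OF irreducibleD(1,3)[OF irr] less.prems(1)] by blast
    then have "merge_guard N" unfolding merge_guard_def using less.prems(3) r by blast
    with irreducibleD(5)[OF irr] show False ..
  qed
qed

theorem lemma1:
  fixes \<N> :: "('a, 's, 'n, 'r) negotiation" and n :: 'n
  assumes "irreducible \<N>"
    and "n \<in> atoms \<N>"
    and "n \<noteq> fin \<N>"
    and "card (outcomes \<N> n) > 1"
  shows "agents \<N> \<subseteq> parties \<N> n"
proof -
  obtain z where "reachable \<N> z" "enables \<N> z n"
    using irreducibleD(2)[OF assms(1)] assms(2) unfolding sound_def by blast
  then show ?thesis using enabled_branching_atom_global[OF assms(1)] assms(2-4) by blast
qed

end
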